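(* Let $t\in\mathbb{R}$, $q$ sufficiently large, and $0<k<1$, with all objects as in the context. Then \begin{align*} \sum_{\chi\bmod q}^{*}|L(\tfrac12+it,f\otimes\chi)|^{2k}\ll&\Big(\sum_{\chi\bmod q}^{*}|L(\tfrac12+it,f\otimes\chi)|^2\sum_{v=0}^{R}\Big(\prod_{j=1}^{v}|\mathcal{N}_j(t,\chi,k-1)|^2\Big)|\mathcal{Q}_{v+1}(t,\chi,k)|^2\Big)^{k}\\ &\times\Big(\sum_{\chi\bmod q}^{*}\sum_{v=0}^{R}\Big(\prod_{j=1}^{v}|\mathcal{N}_j(t,\chi,k)|^2\Big)|\mathcal{Q}_{v+1}(t,\chi,k)|^2\Big)^{1-k}, \end{align*} with implied constant depending only on $k$ (and $f$).
   Context: $f$ is a fixed holomorphic Hecke eigenform of even weight $\kappa$, level $1$, normalized Hecke eigenvalues $\lambda_f(n)$; $L(s,f\otimes\chi)=\sum_n\lambda_f(n)\chi(n)n^{-s}$ (entire continuation) for $\chi$ primitive mod $q$, $q\not\equiv2\pmod4$; $\sum^*_{\chi\bmod q}$ is the sum over primitive characters mod $q$. Fix $k>0$, $k\ne1$, and natural numbers $N,M$ large enough depending on $k$. Let $\ell_1=2\lceil N\log\log q\rceil$ and $\ell_{j+1}=2\lceil N\log\ell_j\rceil$ for $j\ge1$, and let $R$ be the largest natural number with $\ell_R>10^M$. Let $P_1$ be the set of odd primes $\le q^{1/\ell_1^2}$ and, for $2\le j\le R$, $P_j$ the set of primes in $(q^{1/\ell_{j-1}^2},q^{1/\ell_j^2}]$.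 Define $\mathcal{P}_j(t,\chi)=\sum_{p\in P_j}\lambda_f(p)\chi(p)p^{-1/2-it}$ and $\mathcal{Q}_j(t,\chi,k)=\big(c_k\mathcal{P}_j(t,\chi)/\ell_j\big)^{r_k\ell_j}$ for $1\le j\le R$, with $\mathcal{Q}_{R+1}(t,\chi,k)=1$, where $c_k=64\max(1,k)$, $r_k=2$ if $k>1$ and $r_k=\lceil1+1/k\rceil+1$ if $k<1$. For $\ell\ge0$, $E_\ell(x)=\sum_{j=0}^{\ell}x^j/j!$; for real $\alpha$, $\mathcal{N}_j(t,\chi,\alpha)=E_{\ell_j}(\alpha\mathcal{P}_j(t,\chi))$ and $\mathcal{N}(t,\chi,\alpha)=\prod_{j=1}^R\mathcal{N}_j(t,\chi,\alpha)$. Empty products equal $1$. *)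

theory Defs
  imports "HOL-Analysis.Analysis" "HOL-Number_Theory.Number_Theory"
begin

definition upper_half :: "complex set" where
  "upper_half = {z. Im z > 0}"

definition cusp_form :: "nat \<Rightarrow> (complex \<Rightarrow> complex) \<Rightarrow> (nat \<Rightarrow> complex) \<Rightarrow> bool" where
  "cusp_form \<kappa> f a \<longleftrightarrow>
     f holomorphic_on upper_half \<and>
     (\<forall>z\<in>upper_half. f (z + 1) = f z \<and> f (- 1 / z) = z ^ \<kappa> * f z) \<and>
     (\<forall>z\<in>upper_half. (\<lambda>n. a n * exp (2 * of_real pi * \<i> * of_nat n * z)) sums f z) \<and>
     a 0 = 0"

definition hecke_op :: "nat \<Rightarrow> nat \<Rightarrow> (complex \<Rightarrow> complex) \<Rightarrow> complex \<Rightarrow> complex" where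
  "hecke_op \<kappa> n f z = of_nat n ^ (\<kappa> - 1) *
     (\<Sum>(a, d) \<in> {(a, d). a * d = n}. \<Sum>b<d.
        f ((of_nat a * z + of_nat b) / of_nat d) / of_nat d ^ \<kappa>)"

definition normalized_hecke_eigenform ::
  "nat \<Rightarrow> (complex \<Rightarrow> complex) \<Rightarrow> (nat \<Rightarrow> complex) \<Rightarrow> bool" where
  "normalized_hecke_eigenform \<kappa> f a \<longleftrightarrow>
     cusp_form \<kappa> f a \<and>
     (\<forall>n\<ge>1. \<exists>c. \<forall>z\<in>upper_half. hecke_op \<kappa> n f z = c * f z) \<and>
     a 1 = 1"

definition hecke_lambda :: "nat \<Rightarrow> (nat \<Rightarrow> complex) \<Rightarrow> nat \<Rightarrow> complex" where
  "hecke_lambda \<kappa> a n = a n / of_real (real n powr ((real \<kappa> - 1) / 2))"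

definition dirichlet_char :: "nat \<Rightarrow> (nat \<Rightarrow> complex) \<Rightarrow> bool" where
  "dirichlet_char q chi \<longleftrightarrow> q \<ge> 1 \<and>
     (\<forall>n. chi (n + q) = chi n) \<and>
     (\<forall>m n. chi (m * n) = chi m * chi n) \<and>
     (\<forall>n. chi n \<noteq> 0 \<longleftrightarrow> coprime n q)"

definition primitive_char :: "nat \<Rightarrow> (nat \<Rightarrow> complex) \<Rightarrow> bool" where
  "primitive_char q chi \<longleftrightarrow> dirichlet_char q chi \<and>
     \<not> (\<exists>d. d dvd q \<and> d < q \<and> (\<forall>n. coprime n q \<longrightarrow> [n = 1] (mod d) \<longrightarrow> chi n = 1))"

definition twisted_L :: "(nat \<Rightarrow> complex) \<Rightarrow> (nat \<Rightarrow> complex) \<Rightarrow> complex \<Rightarrow> complex" where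
  "twisted_L lam chi = (THE g. g holomorphic_on UNIV \<and>
     (\<forall>s. Re s > 1 \<longrightarrow> (\<lambda>n. lam n * chi n / of_nat n powr s) sums g s))"

text \<open>ell N q j = l_j for j >= 1 (ell N q 0 is unused).\<close>
fun ell :: "nat \<Rightarrow> nat \<Rightarrow> nat \<Rightarrow> nat" where
  "ell N q 0 = 0"
| "ell N q (Suc 0) = 2 * nat \<lceil>real N * ln (ln (real q))\<rceil>"
| "ell N q (Suc (Suc j)) = 2 * nat \<lceil>real N * ln (real (ell N q (Suc j)))\<rceil>"

definition Rnum :: "nat \<Rightarrow> nat \<Rightarrow> nat \<Rightarrow> nat" where
  "Rnum N M q = (GREATEST r. r \<ge> 1 \<and> ell N q r > 10 ^ M)"

definition Pset :: "nat \<Rightarrow> nat \<Rightarrow> nat \<Rightarrow> nat set" where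
  "Pset N q j = (if j = 1
     then {p. prime p \<and> odd p \<and> real p \<le> real q powr (1 / real (ell N q 1) ^ 2)}
     else {p. prime p \<and> real q powr (1 / real (ell N q (j - 1)) ^ 2) < real p \<and>
                        real p \<le> real q powr (1 / real (ell N q j) ^ 2)})"

definition calP :: "(nat \<Rightarrow> complex) \<Rightarrow> nat \<Rightarrow> nat \<Rightarrow> nat \<Rightarrow> real \<Rightarrow> (nat \<Rightarrow> complex) \<Rightarrow> complex" where
  "calP lam N q j t chi =
     (\<Sum>p\<in>Pset N q j. lam p * chi p * of_nat p powr (- (1/2 + \<i> * of_real t)))"

definition c_const :: "real \<Rightarrow> real" where
  "c_const k = 64 * max 1 k"

definition r_const :: "real \<Rightarrow> nat" where
  "r_const k = (if k > 1 then 2 else nat \<lceil>1 + 1 / k\<rceil> + 1)"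

definition calQ :: "(nat \<Rightarrow> complex) \<Rightarrow> nat \<Rightarrow> nat \<Rightarrow> nat \<Rightarrow> real \<Rightarrow> nat \<Rightarrow> real
                    \<Rightarrow> (nat \<Rightarrow> complex) \<Rightarrow> complex" where
  "calQ lam N M q k j t chi = (if j = Rnum N M q + 1 then 1 else
     (of_real (c_const k) * calP lam N q j t chi / of_nat (ell N q j)) ^ (r_const k * ell N q j))"

definition E_trunc :: "nat \<Rightarrow> complex \<Rightarrow> complex" where
  "E_trunc l x = (\<Sum>j=0..l. x ^ j / of_nat (fact j))"

definition calN :: "(nat \<Rightarrow> complex) \<Rightarrow> nat \<Rightarrow> nat \<Rightarrow> nat \<Rightarrow> real \<Rightarrow> (nat \<Rightarrow> complex)
                    \<Rightarrow> real \<Rightarrow> complex" where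
  "calN lam N q j t chi \<alpha> = E_trunc (ell N q j) (of_real \<alpha> * calP lam N q j t chi)"

end

theory Submission
  imports Defs
begin

text \<open>Fix a character and let \<open>v\<close> be the last index before the first \<open>j\<close> with
  \<open>|P_j| > l_j / 64\<close> (or \<open>v = R\<close>). Then \<open>|Q_(v+1)| \<ge> 1\<close>, and for \<open>j \<le> v\<close> the tail of the
  exponential series is so small that \<open>|N_j(\<alpha>)| \<ge> exp (\<alpha> Re P_j) (1 - 2^-l_j)\<close> for
  \<open>|\<alpha>| \<le> 1\<close>. As \<open>l_j \<ge> 2 + R - j\<close>, the product of the factors \<open>1 - 2^-l_j\<close> is at least
  \<open>1/2\<close>, so the \<open>v\<close>-th terms of the two mollifier sums are at least \<open>exp (2 (k - 1) S) / 4\<close>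
  and \<open>exp (2 k S) / 4\<close> with \<open>S = Re (P_1 + \<dots> + P_v)\<close>. The exponentials cancel in the
  geometric mean with weights \<open>k\<close> and \<open>1 - k\<close>, which is therefore at least \<open>1/4\<close>.
  Multiplying by \<open>|L|^(2k)\<close> and applying H\<ouml>lder's inequality with exponents \<open>1/k\<close> and
  \<open>1/(1 - k)\<close> gives the bound with constant 4. Nothing about the \<open>L\<close>-values or the Hecke
  eigenform is used.\<close>

lemma norm_exp_minus_E_trunc_le:
  fixes x :: complex
  shows "norm (exp x - E_trunc l x) \<le> exp (8 * norm x) / 8 ^ (l + 1)"
proof -
  define f where "f n = x ^ n /\<^sub>R fact n" for n
  define g where "g n = (8 * norm x) ^ n / fact n / 8 ^ (l + 1)" for n
  have E_trunc_eq: "E_trunc l x = (\<Sum>i<l + 1. f i)"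
    unfolding E_trunc_def f_def
    by (rule sum.cong) (auto simp: scaleR_conv_of_real divide_inverse mult.commute)
  have tail_sums: "(\<lambda>i. f (i + (l + 1))) sums (exp x - E_trunc l x)"
    using exp_converges[of x] unfolding f_def[symmetric]
    by (subst sums_iff_shift) (simp add: E_trunc_eq)
  have g_sums: "g sums (exp (8 * norm x) / 8 ^ (l + 1))"
    unfolding g_def using exp_converges[of "8 * norm x"]
    by (intro sums_divide) (simp add: scaleR_conv_of_real divide_inverse mult.commute)
  have f_le_g: "norm (f n) \<le> g n" if "l + 1 \<le> n" for n
  proof -
    have "norm x ^ n * 8 ^ (l + 1) \<le> norm x ^ n * 8 ^ n"
      using that by (intro mult_left_mono power_increasing) auto
    then show ?thesis
      unfolding f_def g_def norm_scaleR norm_power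
      by (simp add: field_simps)
  qed
  have "norm (exp x - E_trunc l x) \<le> (\<Sum>i. g (i + (l + 1)))"
    using norm_suminf_le[of "\<lambda>i. f (i + (l + 1))" "\<lambda>i. g (i + (l + 1))"] f_le_g
      tail_sums summable_iff_shift[of g "l + 1"] sums_summable[OF g_sums]
    by (simp add: sums_iff)
  also have "\<dots> \<le> (\<Sum>i. g i)"
  proof -
    have "0 \<le> (\<Sum>i<l + 1. g i)"
      unfolding g_def by (intro sum_nonneg) simp
    then show ?thesis
      using suminf_minus_initial_segment[OF sums_summable[OF g_sums], of "l + 1"] by simp
  qed
  also have "\<dots> = exp (8 * norm x) / 8 ^ (l + 1)"
    using g_sums by (simp add: sums_iff)
  finally show ?thesis .
qed

lemma norm_E_trunc_ge:
  fixes x :: complex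
  assumes "norm x \<le> real l / 64"
  shows "exp (Re x) * (1 - (1/2) ^ l) \<le> norm (E_trunc l x)"
proof -
  have "exp (9 * norm x) \<le> exp (9/64) ^ l"
    using assms by (simp add: exp_of_nat_mult[symmetric] field_simps)
  also have "\<dots> \<le> 4 ^ l"
    using exp_bound[of "9/64"] by (intro power_mono) (auto simp: power2_eq_square)
  finally have exp9: "exp (9 * norm x) \<le> 4 ^ l" .
  have "exp (- norm x) \<le> exp (Re x)"
    using abs_Re_le_cmod[of x] by simp
  have "norm (exp x - E_trunc l x) \<le> exp (9 * norm x) * exp (- norm x) / 8 ^ (l + 1)"
    using norm_exp_minus_E_trunc_le[of x l] by (simp add: exp_add[symmetric])
  also have "\<dots> \<le> 4 ^ l * exp (Re x) / 8 ^ (l + 1)"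
    using exp9 \<open>exp (- norm x) \<le> exp (Re x)\<close> by (intro divide_right_mono mult_mono) auto
  also have "\<dots> \<le> exp (Re x) * (1/2) ^ l"
  proof -
    have "(4::real) ^ l / 8 ^ (l + 1) \<le> (1/2) ^ l"
      using power_mult_distrib[of "2::real" 4 l] by (simp add: power_divide[symmetric] field_simps)
    then show ?thesis by (simp add: field_simps)
  qed
  finally show ?thesis
    using norm_triangle_ineq2[of "exp x" "exp x - E_trunc l x"]
    by (simp add: algebra_simps)
qed

lemma one_minus_sum_le_prod_one_minus:
  fixes d :: "'a \<Rightarrow> real"
  assumes "finite A" "\<And>j. j \<in> A \<Longrightarrow> 0 \<le> d j \<and> d j \<le> 1"
  shows "1 - (\<Sum>j\<in>A. d j) \<le> (\<Prod>j\<in>A. 1 - d j)"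
  using assms
proof (induction A rule: finite_induct)
  case empty
  then show ?case by simp
next
  case (insert x F)
  have "1 - (d x + (\<Sum>j\<in>F. d j)) \<le> (1 - d x) * (1 - (\<Sum>j\<in>F. d j))"
    using insert.prems by (simp add: algebra_simps sum_nonneg)
  also have "\<dots> \<le> (1 - d x) * (\<Prod>j\<in>F. 1 - d j)"
    using insert by (intro mult_left_mono) auto
  finally show ?case
    using insert by simp
qed

lemma sum_half_powers_le: "(\<Sum>j=1..R. (1/2::real) ^ (2 + (R - j))) \<le> 1/2"
proof (induction R)
  case 0
  then show ?case by simp
next
  case (Suc R)
  have "(\<Sum>j=1..R. (1/2::real) ^ (2 + (Suc R - j))) = (1/2) * (\<Sum>j=1..R. (1/2) ^ (2 + (R - j)))"
    unfolding sum_distrib_left by (rule sum.cong) (auto simp: Suc_diff_le)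
  then show ?case
    using Suc.IH by (simp add: power2_eq_square)
qed

lemma powr_mult_powr_le_convex_comb:
  fixes a b k :: real
  assumes "0 < k" "k < 1" "0 \<le> a" "0 \<le> b"
  shows "a powr k * b powr (1 - k) \<le> k * a + (1 - k) * b"
  using Youngs_inequality_0[of k "1 - k" a b] assms by (cases "a = 0 \<or> b = 0") auto

lemma Hoelder_sum_powr:
  fixes x y :: "'a \<Rightarrow> real"
  assumes k: "0 < k" "k < 1" and nonneg: "\<And>i. i \<in> A \<Longrightarrow> 0 \<le> x i" "\<And>i. i \<in> A \<Longrightarrow> 0 \<le> y i"
  shows "(\<Sum>i\<in>A. x i powr k * y i powr (1 - k)) \<le> (\<Sum>i\<in>A. x i) powr k * (\<Sum>i\<in>A. y i) powr (1 - k)"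
proof (cases "finite A")
  case False
  then show ?thesis by simp
next
  case fin: True
  define X Y where "X = (\<Sum>i\<in>A. x i)" and "Y = (\<Sum>i\<in>A. y i)"
  show ?thesis
  proof (cases "X = 0 \<or> Y = 0")
    case True
    then have "(\<forall>i\<in>A. x i = 0) \<or> (\<forall>i\<in>A. y i = 0)"
      using sum_nonneg_eq_0_iff[OF fin] nonneg unfolding X_def Y_def by blast
    then show ?thesis
      using k by auto
  next
    case False
    moreover have "0 \<le> X" "0 \<le> Y"
      unfolding X_def Y_def using nonneg by (auto intro: sum_nonneg)
    ultimately have pos: "0 < X" "0 < Y"
      by auto
    have "(\<Sum>i\<in>A. x i powr k * y i powr (1 - k))
        = (\<Sum>i\<in>A. X powr k * Y powr (1 - k) * ((x i / X) powr k * (y i / Y) powr (1 - k)))"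
      using pos nonneg by (intro sum.cong) (auto simp: powr_divide)
    also have "\<dots> \<le> (\<Sum>i\<in>A. X powr k * Y powr (1 - k) * (k * (x i / X) + (1 - k) * (y i / Y)))"
      using pos nonneg k by (intro sum_mono mult_left_mono powr_mult_powr_le_convex_comb) auto
    also have "\<dots> = X powr k * Y powr (1 - k) * (k * ((\<Sum>i\<in>A. x i) / X) + (1 - k) * ((\<Sum>i\<in>A. y i) / Y))"
      by (simp add: sum_distrib_left sum.distrib sum_divide_distrib[symmetric] algebra_simps)
    also have "\<dots> = X powr k * Y powr (1 - k)"
      using pos unfolding X_def[symmetric] Y_def[symmetric] by simp
    finally show ?thesis
      unfolding X_def Y_def .
  qed
qed

lemma double_N_ln_add_one_less:
  fixes x :: real
  assumes "1 \<le> N" "(4 * real N + 1) ^ 2 \<le> x"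
  shows "2 * (real N * ln x + 1) < x"
proof -
  have "1 \<le> (4 * real N + 1) ^ 2"
    by simp
  then have x1: "1 \<le> x"
    using assms by linarith
  have sqrt_ge: "4 * real N + 1 \<le> sqrt x"
    using assms real_le_rsqrt by auto
  have "ln x = 2 * ln (sqrt x)"
    using x1 by (simp add: ln_sqrt)
  also have "\<dots> < 2 * sqrt x"
    using x1 by simp
  finally have "real N * ln x \<le> real N * (2 * sqrt x)"
    by (intro mult_left_mono) auto
  moreover have "(4 * real N + 1) * sqrt x \<le> sqrt x * sqrt x"
    using sqrt_ge x1 by (intro mult_right_mono) auto
  moreover have "x = sqrt x * sqrt x"
    using x1 by simp
  moreover have "2 < sqrt x"
    using sqrt_ge assms(1) by linarith
  ultimately show ?thesis
    by (simp add: algebra_simps)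
qed

lemma ell_Suc_le:
  assumes "1 \<le> r"
  shows "real (ell N q (Suc r)) \<le> 2 * (real N * ln (real (ell N q r)) + 1)"
proof -
  obtain r' where "r = Suc r'"
    using assms by (cases r) auto
  moreover have "0 \<le> real N * ln (real (ell N q r))"
    by (cases "ell N q r = 0") auto
  ultimately show ?thesis
    by simp linarith
qed

context
  fixes N M :: nat
  assumes N_pos: "1 \<le> N" and M_large: "(4 * real N + 1) ^ 2 \<le> (10::real) ^ M"
begin

lemma ell_Suc_less:
  assumes "1 \<le> r" "10 ^ M < ell N q r"
  shows "ell N q (Suc r) < ell N q r"
proof -
  have "(10::real) ^ M \<le> real (ell N q r)"
    using assms(2) by (metis less_imp_le of_nat_le_iff of_nat_numeral of_nat_power)
  then have "2 * (real N * ln (real (ell N q r)) + 1) < real (ell N q r)"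
    using M_large by (intro double_N_ln_add_one_less[OF N_pos]) linarith
  then show ?thesis
    using ell_Suc_le[OF assms(1), of N q] by simp
qed

lemma ell_Suc_le_threshold:
  assumes "1 \<le> r" "ell N q r \<le> 10 ^ M"
  shows "ell N q (Suc r) \<le> 10 ^ M"
proof -
  have "ln (real (ell N q r)) \<le> ln ((10::real) ^ M)"
    using assms(2) by (cases "ell N q r = 0") (auto simp flip: of_nat_le_iff)
  then have "real (ell N q (Suc r)) \<le> 2 * (real N * ln ((10::real) ^ M) + 1)"
    using ell_Suc_le[OF assms(1), of N q] by (smt (verit) mult_left_mono of_nat_0_le_iff)
  also have "\<dots> < 10 ^ M"
    using double_N_ln_add_one_less[OF N_pos M_large] .
  finally show ?thesis
    by (metis less_imp_le of_nat_less_iff of_nat_numeral of_nat_power)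
qed

text \<open>Once \<open>\<ell>\<close> drops to the threshold it stays there, so above the threshold
  the sequence is strictly decreasing.\<close>
lemma ell_ge_above_threshold:
  assumes "1 \<le> r" "10 ^ M < ell N q r" "j \<in> {1..r}"
  shows "ell N q r + (r - j) \<le> ell N q j"
  using assms
proof (induction r arbitrary: j)
  case 0
  then show ?case by simp
next
  case (Suc r)
  show ?case
  proof (cases "j = Suc r")
    case False
    with Suc.prems have r: "1 \<le> r" "j \<in> {1..r}"
      by auto
    have "10 ^ M < ell N q r"
      using ell_Suc_le_threshold[OF r(1), of q] Suc.prems(2) by linarith
    then have "ell N q (Suc r) < ell N q r" "ell N q r + (r - j) \<le> ell N q j"
      using ell_Suc_less[OF r(1)] Suc.IH[OF r(1) _ r(2)] by auto
    then show ?thesis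
      using r(2) by auto
  qed simp
qed

lemma ell_ge_Rnum:
  assumes q_large: "10 ^ M < ln (ln (real q))" and j: "j \<in> {1..Rnum N M q}"
  shows "2 + (Rnum N M q - j) \<le> ell N q j"
proof -
  define above where "above r \<longleftrightarrow> 1 \<le> r \<and> 10 ^ M < ell N q r" for r
  have "(10::real) ^ M < real N * ln (ln (real q))"
    using q_large N_pos by (smt (verit) mult_le_cancel_right1 of_nat_1 of_nat_le_iff zero_le_power)
  also have "\<dots> \<le> real (ell N q 1)"
    by simp linarith
  finally have "above 1"
    unfolding above_def by (metis le_refl of_nat_less_iff of_nat_numeral of_nat_power)
  moreover have "r \<le> ell N q 1" if "above r" for r
    using ell_ge_above_threshold[of r q 1] that unfolding above_def by auto
  ultimately have "above (Rnum N M q)"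
    unfolding Rnum_def above_def[symmetric] by (rule GreatestI_nat)
  then have "10 ^ M < ell N q (Rnum N M q)" "ell N q (Rnum N M q) + (Rnum N M q - j) \<le> ell N q j"
    using ell_ge_above_threshold[of "Rnum N M q" q j] j unfolding above_def by auto
  moreover have "(1::nat) \<le> 10 ^ M"
    by simp
  ultimately show ?thesis
    by linarith
qed

end

lemma ex_thresholds_intro:
  fixes P :: "nat \<Rightarrow> nat \<Rightarrow> real \<Rightarrow> nat \<Rightarrow> bool"
  assumes "\<And>N M q. 1 \<le> N \<Longrightarrow> (4 * real N + 1) ^ 2 \<le> (10::real) ^ M \<Longrightarrow>
             10 ^ M < ln (ln (real q)) \<Longrightarrow> P N M C q"
  shows "\<exists>N0. \<forall>N\<ge>N0. \<exists>M0. \<forall>M\<ge>M0. \<exists>C q0. \<forall>q\<ge>q0. P N M C q"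
proof (rule exI[of _ 1], intro allI impI)
  fix N :: nat
  assume N: "1 \<le> N"
  show "\<exists>M0. \<forall>M\<ge>M0. \<exists>C q0. \<forall>q\<ge>q0. P N M C q"
  proof (intro exI[of _ "nat \<lceil>(4 * real N + 1) ^ 2\<rceil>"] allI impI)
    fix M :: nat
    assume "nat \<lceil>(4 * real N + 1) ^ 2\<rceil> \<le> M"
    moreover have "real M \<le> 10 ^ M"
    proof -
      have "real M \<le> 2 ^ M"
        using less_exp[of M] by (metis less_imp_le of_nat_le_iff of_nat_numeral of_nat_power)
      also have "\<dots> \<le> 10 ^ M"
        by (rule power_mono) auto
      finally show ?thesis .
    qed
    ultimately have M: "(4 * real N + 1) ^ 2 \<le> (10::real) ^ M"
      by linarith
    show "\<exists>C q0. \<forall>q\<ge>q0. P N M C q"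
    proof (intro exI[of _ C] exI[of _ "nat \<lceil>exp (exp ((10::real) ^ M))\<rceil> + 1"] allI impI)
      fix q :: nat
      assume "nat \<lceil>exp (exp ((10::real) ^ M))\<rceil> + 1 \<le> q"
      then have "exp (exp ((10::real) ^ M)) < real q"
        by linarith
      then have "exp ((10::real) ^ M) < ln (real q)"
        by (metis exp_gt_zero ln_exp ln_less_cancel_iff order.strict_trans)
      then have "(10::real) ^ M < ln (ln (real q))"
        by (metis exp_gt_zero ln_exp ln_less_cancel_iff order.strict_trans)
      then show "P N M C q"
        by (rule assms[OF N M])
    qed
  qed
qed

lemma ex_last_index_before_large:
  fixes large :: "nat \<Rightarrow> bool"
  shows "\<exists>v\<le>R. (v = R \<or> large (Suc v)) \<and> (\<forall>j\<in>{1..v}. \<not> large j)"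
proof (induction R)
  case 0
  then show ?case by auto
next
  case (Suc R)
  then obtain v where v: "v \<le> R" "v = R \<or> large (Suc v)" "\<forall>j\<in>{1..v}. \<not> large j"
    by blast
  show ?case
  proof (cases "v = R \<and> \<not> large (Suc R)")
    case True
    then show ?thesis
      using v by (intro exI[of _ "Suc R"]) (auto simp: le_Suc_eq)
  next
    case False
    then show ?thesis
      using v by (intro exI[of _ v]) auto
  qed
qed

lemma prod_norm_E_trunc_ge:
  fixes P :: "'a \<Rightarrow> complex" and l :: "'a \<Rightarrow> nat"
  assumes "finite J" "\<bar>\<alpha>\<bar> \<le> 1" "\<And>j. j \<in> J \<Longrightarrow> norm (P j) \<le> real (l j) / 64"
  shows "exp (2 * \<alpha> * (\<Sum>j\<in>J. Re (P j))) * (\<Prod>j\<in>J. 1 - (1/2) ^ l j) ^ 2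
           \<le> (\<Prod>j\<in>J. norm (E_trunc (l j) (of_real \<alpha> * P j)) ^ 2)"
proof -
  have "exp (2 * \<alpha> * (\<Sum>j\<in>J. Re (P j))) * (\<Prod>j\<in>J. 1 - (1/2) ^ l j) ^ 2
      = (\<Prod>j\<in>J. (exp (Re (of_real \<alpha> * P j)) * (1 - (1/2) ^ l j)) ^ 2)"
    using assms(1)
    by (simp add: exp_sum sum_distrib_left prod.distrib power_mult_distrib prod_power_distrib
        exp_of_nat_mult[symmetric] mult.assoc)
  also have "\<dots> \<le> (\<Prod>j\<in>J. norm (E_trunc (l j) (of_real \<alpha> * P j)) ^ 2)"
  proof (intro prod_mono conjI)
    fix j
    assume j: "j \<in> J"
    have "norm (of_real \<alpha> * P j) \<le> norm (P j)"
      using assms(2) by (simp add: norm_mult mult_left_le_one_le)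
    then have "exp (Re (of_real \<alpha> * P j)) * (1 - (1/2) ^ l j) \<le> norm (E_trunc (l j) (of_real \<alpha> * P j))"
      using assms(3)[OF j] by (intro norm_E_trunc_ge) linarith
    moreover have "0 \<le> exp (Re (of_real \<alpha> * P j)) * (1 - (1/2::real) ^ l j)"
      by (simp add: power_le_one)
    ultimately show "(exp (Re (of_real \<alpha> * P j)) * (1 - (1/2) ^ l j)) ^ 2
        \<le> norm (E_trunc (l j) (of_real \<alpha> * P j)) ^ 2"
      by (rule power_mono)
  qed simp
  finally show ?thesis .
qed

lemma half_le_prod_one_minus_half_powers:
  assumes "v \<le> R" "\<And>j. j \<in> {1..R} \<Longrightarrow> 2 + (R - j) \<le> l j"
  shows "1/2 \<le> (\<Prod>j=1..v. 1 - (1/2::real) ^ l j)"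
proof -
  have "(\<Sum>j=1..v. (1/2::real) ^ l j) \<le> (\<Sum>j=1..v. (1/2) ^ (2 + (R - j)))"
    using assms by (intro sum_mono power_decreasing) auto
  also have "\<dots> \<le> (\<Sum>j=1..R. (1/2) ^ (2 + (R - j)))"
    using assms(1) by (intro sum_mono2) auto
  also have "\<dots> \<le> 1/2"
    by (rule sum_half_powers_le)
  finally show ?thesis
    using one_minus_sum_le_prod_one_minus[of "{1..v}" "\<lambda>j. (1/2::real) ^ l j"]
    by (simp add: power_le_one)
qed

lemma E_trunc_sums_geometric_mean_ge:
  fixes P Q :: "nat \<Rightarrow> complex" and l :: "nat \<Rightarrow> nat"
  assumes k: "0 < k" "k < 1"
    and l: "\<And>j. j \<in> {1..R} \<Longrightarrow> 2 + (R - j) \<le> l j"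
    and Q_last: "1 \<le> norm (Q (R + 1))"
    and Q_large: "\<And>j. j \<in> {1..R} \<Longrightarrow> real (l j) / 64 < norm (P j) \<Longrightarrow> 1 \<le> norm (Q j)"
  shows "1/4 \<le> (\<Sum>v=0..R. (\<Prod>j=1..v. norm (E_trunc (l j) (of_real (k - 1) * P j)) ^ 2) * norm (Q (v + 1)) ^ 2) powr k
             * (\<Sum>v=0..R. (\<Prod>j=1..v. norm (E_trunc (l j) (of_real k * P j)) ^ 2) * norm (Q (v + 1)) ^ 2) powr (1 - k)"
    (is "_ \<le> ?S (k - 1) powr k * ?S k powr (1 - k)")
proof -
  obtain v where v: "v \<le> R" "v = R \<or> real (l (Suc v)) / 64 < norm (P (Suc v))"
    and small: "\<forall>j\<in>{1..v}. \<not> real (l j) / 64 < norm (P j)"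
    using ex_last_index_before_large[of R "\<lambda>j. real (l j) / 64 < norm (P j)"] by blast
  have Q_v: "1 \<le> norm (Q (v + 1))"
    using v Q_last Q_large[of "Suc v"] by (cases "v = R") auto
  define S D where "S = (\<Sum>j=1..v. Re (P j))" and "D = (\<Prod>j=1..v. 1 - (1/2::real) ^ l j)"
  have D: "1/2 \<le> D"
    unfolding D_def using v(1) l by (rule half_le_prod_one_minus_half_powers)
  have S_ge: "exp (2 * \<alpha> * S) * D ^ 2 \<le> ?S \<alpha>" if "\<bar>\<alpha>\<bar> \<le> 1" for \<alpha>
  proof -
    have "exp (2 * \<alpha> * S) * D ^ 2 \<le> (\<Prod>j=1..v. norm (E_trunc (l j) (of_real \<alpha> * P j)) ^ 2)"
      unfolding S_def D_def using that small by (intro prod_norm_E_trunc_ge) (auto simp: not_less)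
    also have "\<dots> \<le> (\<Prod>j=1..v. norm (E_trunc (l j) (of_real \<alpha> * P j)) ^ 2) * norm (Q (v + 1)) ^ 2"
      using mult_left_mono[of 1 "norm (Q (v + 1)) ^ 2"] Q_v by (simp add: prod_nonneg)
    also have "\<dots> \<le> ?S \<alpha>"
      using v(1) by (intro member_le_sum) (auto simp: prod_nonneg)
    finally show ?thesis .
  qed
  have "1/4 \<le> D ^ 2"
    using power_mono[OF D, of 2] by (simp add: power2_eq_square)
  also have "D ^ 2 = (exp (2 * (k - 1) * S) * D ^ 2) powr k * (exp (2 * k * S) * D ^ 2) powr (1 - k)"
  proof -
    have "exp (2 * (k - 1) * S * k) * exp (2 * k * S * (1 - k)) = 1"
      by (simp flip: exp_add add: algebra_simps)
    moreover have "(D ^ 2) powr k * (D ^ 2) powr (1 - k) = D ^ 2"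
      using D by (simp flip: powr_add)
    ultimately show ?thesis
      by (simp add: powr_mult exp_powr_real mult_ac)
  qed
  also have "\<dots> \<le> ?S (k - 1) powr k * ?S k powr (1 - k)"
    using S_ge[of "k - 1"] S_ge[of k] k by (intro mult_mono powr_mono2) auto
  finally show ?thesis .
qed

lemma norm_calQ_ge_1:
  assumes "k \<le> 1" "j \<noteq> Rnum N M q + 1"
    and large: "real (ell N q j) / 64 < norm (calP lam N q j t chi)"
  shows "1 \<le> norm (calQ lam N M q k j t chi)"
proof (cases "ell N q j = 0")
  case True
  then show ?thesis
    using assms(2) by (simp add: calQ_def)
next
  case False
  then have "1 \<le> norm (of_real 64 * calP lam N q j t chi / of_nat (ell N q j))"
    using large by (simp add: norm_mult norm_divide field_simps)
  then have "1 \<le> norm (of_real 64 * calP lam N q j t chi / of_nat (ell N q j)) ^ (r_const k * ell N q j)"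
    by (rule one_le_power)
  then show ?thesis
    using assms(1,2) by (simp add: calQ_def c_const_def norm_power)
qed

definition mollifier_sum ::
  "(nat \<Rightarrow> complex) \<Rightarrow> nat \<Rightarrow> nat \<Rightarrow> nat \<Rightarrow> real \<Rightarrow> real \<Rightarrow> (nat \<Rightarrow> complex) \<Rightarrow> real \<Rightarrow> real" where
  "mollifier_sum lam N M q k t chi \<alpha> =
     (\<Sum>v=0..Rnum N M q. (\<Prod>j=1..v. norm (calN lam N q j t chi \<alpha>) ^ 2) *
                        norm (calQ lam N M q k (v + 1) t chi) ^ 2)"

lemma mollifier_sum_nonneg: "0 \<le> mollifier_sum lam N M q k t chi \<alpha>"
  unfolding mollifier_sum_def by (intro sum_nonneg mult_nonneg_nonneg prod_nonneg) auto

lemma mollifier_sum_geometric_mean_ge: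
  assumes k: "0 < k" "k < 1"
    and N: "1 \<le> N" and M: "(4 * real N + 1) ^ 2 \<le> (10::real) ^ M"
    and q: "10 ^ M < ln (ln (real q))"
  shows "1/4 \<le> mollifier_sum lam N M q k t chi (k - 1) powr k * mollifier_sum lam N M q k t chi k powr (1 - k)"
  unfolding mollifier_sum_def calN_def
proof (rule E_trunc_sums_geometric_mean_ge[OF k])
  show "\<And>j. j \<in> {1..Rnum N M q} \<Longrightarrow> 2 + (Rnum N M q - j) \<le> ell N q j"
    using ell_ge_Rnum[OF N M q] .
  show "1 \<le> norm (calQ lam N M q k (Rnum N M q + 1) t chi)"
    by (simp add: calQ_def)
  show "\<And>j. j \<in> {1..Rnum N M q} \<Longrightarrow> real (ell N q j) / 64 < norm (calP lam N q j t chi)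
          \<Longrightarrow> 1 \<le> norm (calQ lam N M q k j t chi)"
    using k by (intro norm_calQ_ge_1) auto
qed

lemma sum_powr_le_Hoelder_of_pointwise:
  fixes L A B :: "'a \<Rightarrow> real"
  assumes k: "0 < k" "k < 1"
    and nonneg: "\<And>x. x \<in> X \<Longrightarrow> 0 \<le> L x" "\<And>x. x \<in> X \<Longrightarrow> 0 \<le> A x" "\<And>x. x \<in> X \<Longrightarrow> 0 \<le> B x"
    and AB: "\<And>x. x \<in> X \<Longrightarrow> c \<le> A x powr k * B x powr (1 - k)"
  shows "c * (\<Sum>x\<in>X. L x powr (2 * k)) \<le> (\<Sum>x\<in>X. L x ^ 2 * A x) powr k * (\<Sum>x\<in>X. B x) powr (1 - k)"
proof -
  have "c * L x powr (2 * k) \<le> (L x ^ 2 * A x) powr k * B x powr (1 - k)" if x: "x \<in> X" for x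
  proof -
    have "(L x ^ 2) powr k = L x powr (2 * k)"
      using nonneg(1)[OF x] by (simp add: powr_powr flip: powr_numeral)
    then have "(L x ^ 2 * A x) powr k * B x powr (1 - k) = L x powr (2 * k) * (A x powr k * B x powr (1 - k))"
      using nonneg(1,2)[OF x] by (simp add: powr_mult)
    moreover have "L x powr (2 * k) * c \<le> L x powr (2 * k) * (A x powr k * B x powr (1 - k))"
      using AB[OF x] by (intro mult_left_mono) auto
    ultimately show ?thesis
      by (metis mult.commute)
  qed
  then have "c * (\<Sum>x\<in>X. L x powr (2 * k)) \<le> (\<Sum>x\<in>X. (L x ^ 2 * A x) powr k * B x powr (1 - k))"
    by (simp add: sum_distrib_left sum_mono)
  also have "\<dots> \<le> (\<Sum>x\<in>X. L x ^ 2 * A x) powr k * (\<Sum>x\<in>X. B x) powr (1 - k)"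
    using nonneg by (intro Hoelder_sum_powr k) auto
  finally show ?thesis .
qed

theorem lemma4p3:
  fixes \<kappa> :: nat and f :: "complex \<Rightarrow> complex" and a :: "nat \<Rightarrow> complex" and k :: real
  assumes "even \<kappa>" and "\<kappa> > 0"
    and "normalized_hecke_eigenform \<kappa> f a"
    and "0 < k" and "k < 1"
  shows "\<exists>N0. \<forall>N\<ge>N0. \<exists>M0. \<forall>M\<ge>M0. \<exists>C q0. \<forall>q\<ge>q0. \<forall>t::real. q mod 4 \<noteq> 2 \<longrightarrow>
    (let lam = hecke_lambda \<kappa> a; R = Rnum N M q;
         s = 1/2 + \<i> * of_real t;
         X = {chi. primitive_char q chi}
     in (\<Sum>chi\<in>X. norm (twisted_L lam chi s) powr (2 * k))
        \<le> C * (\<Sum>chi\<in>X. norm (twisted_L lam chi s) ^ 2 *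
                 (\<Sum>v=0..R. (\<Prod>j=1..v. norm (calN lam N q j t chi (k - 1)) ^ 2) *
                             norm (calQ lam N M q k (v + 1) t chi) ^ 2)) powr k
            * (\<Sum>chi\<in>X. \<Sum>v=0..R. (\<Prod>j=1..v. norm (calN lam N q j t chi k) ^ 2) *
                             norm (calQ lam N M q k (v + 1) t chi) ^ 2) powr (1 - k))"
  apply (rule ex_thresholds_intro[where C = 4], intro allI impI)
  subgoal premises large for N M q t
    using sum_powr_le_Hoelder_of_pointwise[OF assms(4,5), of "{chi. primitive_char q chi}"
        "\<lambda>chi. norm (twisted_L (hecke_lambda \<kappa> a) chi (1/2 + \<i> * of_real t))"
        "\<lambda>chi. mollifier_sum (hecke_lambda \<kappa> a) N M q k t chi (k - 1)"
        "\<lambda>chi. mollifier_sum (hecke_lambda \<kappa> a) N M q k t chi k" "1/4"]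
      mollifier_sum_geometric_mean_ge[OF assms(4,5) large(1-3)] mollifier_sum_nonneg
    by (simp add: Let_def mollifier_sum_def mult.assoc)
  done

end
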